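(* Let $\varphi:\mathbb{R}^n\to\mathbb{R}$ be continuously differentiable around $\bar x$ with $\nabla\varphi(\bar x)=0$, where $\nabla\varphi$ is locally Lipschitzian around $\bar x$ with modulus $\ell>0$ and semismooth$^*$ at $\bar x$. Let $x^k\to\bar x$ with $x^k\neq\bar x$ for all $k$, and let $\{d^k\}$ satisfy $\|x^k+d^k-\bar x\|=o(\|x^k-\bar x\|)$. Consider: (i) $\nabla\varphi$ is directionally differentiable at $\bar x$ and there is $\kappa>0$ with $\langle\nabla\varphi(x^k),d^k\rangle\le-\frac1\kappa\|d^k\|^2$ for all sufficiently large $k$; (ii) there is $\kappa>0$ with $\varphi(x^k+d^k)-\varphi(x^k)\le\langle\nabla\varphi(x^k+d^k),d^k\rangle-\frac1{2\kappa}\|d^k\|^2$ for all sufficiently large $k$. Then $\varphi(x^k+d^k)\le\varphi(x^k)+\sigma\langle\nabla\varphi(x^k),d^k\rangle$ for all sufficiently large $k$, provided that either (i) holds and $\sigma\in(0,\tfrac12)$, or (ii) holds and $\sigma\in(0,1/(2\ell\kappa))$.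
   Context: Regular normal cone: $\widehat N_\Omega(\bar z):=\{v\mid \limsup_{z\to\bar z,\,z\in\Omega}\langle v,z-\bar z\rangle/\|z-\bar z\|\le 0\}$. Directional limiting normal cone: $N_\Omega(\bar z;d):=\{v\mid\exists t_k\downarrow0,\ d_k\to d,\ v_k\to v \text{ with } v_k\in\widehat N_\Omega(\bar z+t_kd_k)\}$. Directional coderivative of $F:\mathbb{R}^n\rightrightarrows\mathbb{R}^m$: $D^*F((\bar x,\bar y);(u,v))(v^* ):=\{u^*\mid(u^*,-v^* )\in N_{\operatorname{gph}F}((\bar x,\bar y);(u,v))\}$. $F$ is semismooth$^*$ at $(\bar x,\bar y)\in\operatorname{gph}F$ if for all $(u,v)\in\mathbb{R}^n\times\mathbb{R}^m$, $\langle u^*,u\rangle=\langle v^*,v\rangle$ whenever $u^*\in D^*F((\bar x,\bar y);(u,v))(v^* )$. "$\nabla\varphi$ semismooth$^*$ at $\bar x$" means at $(\bar x,\nabla\varphi(\bar x))$. *)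

theory Defs
  imports "HOL-Analysis.Analysis" "HOL-Library.Liminf_Limsup" "HOL-Library.Landau_Symbols"
begin

definition regular_normal_cone :: "'a::real_inner set \<Rightarrow> 'a \<Rightarrow> 'a set" where
  "regular_normal_cone \<Omega> zb =
     (if zb \<in> \<Omega> then
        {v. Limsup (at zb within \<Omega>) (\<lambda>z. ereal (inner v (z - zb) / norm (z - zb))) \<le> 0}
      else {})"

definition dir_normal_cone :: "'a::real_inner set \<Rightarrow> 'a \<Rightarrow> 'a \<Rightarrow> 'a set" where
  "dir_normal_cone \<Omega> zb d =
     {v. \<exists>(t::nat \<Rightarrow> real) dd vv. (\<forall>k. t k > 0) \<and> t \<longlonglongrightarrow> 0 \<and>
          dd \<longlonglongrightarrow> d \<and> vv \<longlonglongrightarrow> v \<and>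
          (\<forall>k. vv k \<in> regular_normal_cone \<Omega> (zb + t k *\<^sub>R dd k))}"

definition graph :: "('a \<Rightarrow> 'b set) \<Rightarrow> ('a \<times> 'b) set" where
  "graph F = {(x, y). y \<in> F x}"

definition dir_coderiv ::
  "('a::real_inner \<Rightarrow> 'b::real_inner set) \<Rightarrow> 'a \<times> 'b \<Rightarrow> 'a \<times> 'b \<Rightarrow> 'b \<Rightarrow> 'a set" where
  "dir_coderiv F zb uv vs = {us. (us, - vs) \<in> dir_normal_cone (graph F) zb uv}"

definition semismooth_star :: "('a::real_inner \<Rightarrow> 'b::real_inner set) \<Rightarrow> 'a \<Rightarrow> 'b \<Rightarrow> bool" where
  "semismooth_star F xb yb \<longleftrightarrow> (xb, yb) \<in> graph F \<and>
     (\<forall>u v vs us. us \<in> dir_coderiv F (xb, yb) (u, v) vs \<longrightarrow> inner us u = inner vs v)"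

definition semismooth_star_fun :: "('a::real_inner \<Rightarrow> 'b::real_inner) \<Rightarrow> 'a \<Rightarrow> bool" where
  "semismooth_star_fun g xb \<longleftrightarrow> semismooth_star (\<lambda>x. {g x}) xb (g xb)"

definition directionally_differentiable :: "('a::real_normed_vector \<Rightarrow> 'b::real_normed_vector) \<Rightarrow> 'a \<Rightarrow> bool" where
  "directionally_differentiable g xb \<longleftrightarrow>
     (\<forall>u. \<exists>w. ((\<lambda>t. (g (xb + t *\<^sub>R u) - g xb) /\<^sub>R t) \<longlongrightarrow> w) (at_right 0))"

end

theory Submission
  imports Defs
begin

(*
  Since x_k + d_k - xb = o(|x_k - xb|), the step d_k is comparable to x_k - xb, and g = grad phi
  is of size O(|x_k - xb|) at x_k but o(|x_k - xb|) at x_k + d_k.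

  Case (ii): the quadratic decrease -|d_k|^2/(2 kappa) then beats the error
  <g(x_k + d_k), d_k> = o(|d_k|^2) and the term sigma <g(x_k), d_k>, which is at least about
  -sigma l |d_k|^2; this is where sigma < 1/(2 l kappa) enters.

  Case (i): a Lipschitz, directionally differentiable map is almost positively homogeneous at xb,
  uniformly in the direction by compactness of the unit sphere.  Hence
  g(x_k + t d_k) = (1 - t) g(x_k) + o(|d_k|) along the step, and the mean value theorem gives
  phi(x_k + d_k) - phi(x_k) <= <g(x_k), d_k>/2 + o(|d_k|^2); the descent condition absorbs the
  error for sigma < 1/2.
*)

definition homogeneity_defect :: "('a::real_vector \<Rightarrow> 'b::real_vector) \<Rightarrow> 'a \<Rightarrow> 'a \<Rightarrow> real \<Rightarrow> 'b" where
  "homogeneity_defect g xb h s = g (xb + s *\<^sub>R h) - g xb - s *\<^sub>R (g (xb + h) - g xb)"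

lemma directionally_differentiable_ray_homogeneous:
  fixes g :: "'a::real_normed_vector \<Rightarrow> 'b::real_normed_vector"
  assumes "directionally_differentiable g xb" and "\<epsilon> > 0"
  shows "\<exists>b>0. \<forall>r s. 0 < r \<longrightarrow> r < b \<longrightarrow> 0 \<le> s \<longrightarrow> s \<le> 1 \<longrightarrow>
           norm (homogeneity_defect g xb (r *\<^sub>R u) s) \<le> \<epsilon> * r"
proof -
  obtain w where "((\<lambda>t. (g (xb + t *\<^sub>R u) - g xb) /\<^sub>R t) \<longlongrightarrow> w) (at_right 0)"
    using assms(1) unfolding directionally_differentiable_def by blast
  then have "eventually (\<lambda>t. dist ((g (xb + t *\<^sub>R u) - g xb) /\<^sub>R t) w < \<epsilon> / 2) (at_right 0)"
    using assms(2) unfolding tendsto_iff by (meson half_gt_zero)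
  then obtain b where "b > 0"
    and quotient: "\<And>t. 0 < t \<Longrightarrow> t < b \<Longrightarrow> dist ((g (xb + t *\<^sub>R u) - g xb) /\<^sub>R t) w < \<epsilon> / 2"
    by (auto simp: eventually_at_right_field)
  have linear: "norm (g (xb + t *\<^sub>R u) - g xb - t *\<^sub>R w) \<le> \<epsilon> / 2 * t" if "0 \<le> t" "t < b" for t
  proof (cases "t = 0")
    case False
    then have "g (xb + t *\<^sub>R u) - g xb - t *\<^sub>R w = t *\<^sub>R ((g (xb + t *\<^sub>R u) - g xb) /\<^sub>R t - w)"
      by (simp add: algebra_simps)
    then have "norm (g (xb + t *\<^sub>R u) - g xb - t *\<^sub>R w)
        = t * dist ((g (xb + t *\<^sub>R u) - g xb) /\<^sub>R t) w"
      using that by (simp add: dist_norm)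
    also have "\<dots> \<le> t * (\<epsilon> / 2)"
      using quotient[of t] that False by (intro mult_left_mono) auto
    finally show ?thesis by (simp add: mult.commute)
  qed simp
  have "norm (homogeneity_defect g xb (r *\<^sub>R u) s) \<le> \<epsilon> * r"
    if r: "0 < r" "r < b" and s: "0 \<le> s" "s \<le> 1" for r s
  proof -
    have "s * r < b" using r s mult_left_le_one_le[of r s] by linarith
    have "homogeneity_defect g xb (r *\<^sub>R u) s
        = (g (xb + (s * r) *\<^sub>R u) - g xb - (s * r) *\<^sub>R w) - s *\<^sub>R (g (xb + r *\<^sub>R u) - g xb - r *\<^sub>R w)"
      by (simp add: homogeneity_defect_def algebra_simps)
    also have "norm \<dots> \<le> \<epsilon> / 2 * (s * r) + s * (\<epsilon> / 2 * r)"
    proof (rule order_trans[OF norm_triangle_ineq4 add_mono])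
      show "norm (g (xb + (s * r) *\<^sub>R u) - g xb - (s * r) *\<^sub>R w) \<le> \<epsilon> / 2 * (s * r)"
        using linear \<open>s * r < b\<close> r s by simp
      show "norm (s *\<^sub>R (g (xb + r *\<^sub>R u) - g xb - r *\<^sub>R w)) \<le> s * (\<epsilon> / 2 * r)"
        using mult_left_mono[OF linear[of r] \<open>0 \<le> s\<close>] r s by simp
    qed
    also have "\<dots> \<le> \<epsilon> * r"
      using r s \<open>\<epsilon> > 0\<close> mult_left_le_one_le[of "\<epsilon> * r" s] by (simp add: algebra_simps)
    finally show ?thesis .
  qed
  with \<open>b > 0\<close> show ?thesis by blast
qed

lemma homogeneity_defect_change_direction:
  fixes g :: "'a::real_normed_vector \<Rightarrow> 'b::real_normed_vector"
  assumes lip: "l-lipschitz_on (ball xb r) g"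
    and "norm u = 1" "norm c = 1" "0 \<le> n" "n < r" "0 \<le> s" "s \<le> 1"
  shows "norm (homogeneity_defect g xb (n *\<^sub>R u) s)
           \<le> norm (homogeneity_defect g xb (n *\<^sub>R c) s) + 2 * l * n * dist c u"
proof -
  have near: "norm (g (xb + t *\<^sub>R u) - g (xb + t *\<^sub>R c)) \<le> l * n * dist c u" if "0 \<le> t" "t \<le> n" for t
  proof -
    have "xb + t *\<^sub>R u \<in> ball xb r" "xb + t *\<^sub>R c \<in> ball xb r"
      using that assms(2-5) by (auto simp: dist_norm)
    then have "norm (g (xb + t *\<^sub>R u) - g (xb + t *\<^sub>R c)) \<le> l * norm ((xb + t *\<^sub>R u) - (xb + t *\<^sub>R c))"
      by (rule lipschitz_on_normD[OF lip])
    also have "norm ((xb + t *\<^sub>R u) - (xb + t *\<^sub>R c)) = t * dist c u"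
      using that by (simp add: dist_norm norm_minus_commute flip: scaleR_diff_right)
    also have "l * (t * dist c u) \<le> l * (n * dist c u)"
      using that lipschitz_on_nonneg[OF lip] by (intro mult_left_mono mult_right_mono) auto
    finally show ?thesis by simp
  qed
  have "homogeneity_defect g xb (n *\<^sub>R u) s
      = homogeneity_defect g xb (n *\<^sub>R c) s
        + (g (xb + (s * n) *\<^sub>R u) - g (xb + (s * n) *\<^sub>R c))
        - s *\<^sub>R (g (xb + n *\<^sub>R u) - g (xb + n *\<^sub>R c))"
    by (simp add: homogeneity_defect_def algebra_simps)
  also have "norm \<dots> \<le> norm (homogeneity_defect g xb (n *\<^sub>R c) s) + l * n * dist c u + s * (l * n * dist c u)"
  proof (rule order_trans[OF norm_triangle_ineq4 add_mono], rule order_trans[OF norm_triangle_ineq add_mono])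
    show "norm (g (xb + (s * n) *\<^sub>R u) - g (xb + (s * n) *\<^sub>R c)) \<le> l * n * dist c u"
      using near assms(4-7) by (simp add: mult_left_le_one_le)
    show "norm (s *\<^sub>R (g (xb + n *\<^sub>R u) - g (xb + n *\<^sub>R c))) \<le> s * (l * n * dist c u)"
      using mult_left_mono[OF near[of n] \<open>0 \<le> s\<close>] assms(4,6) by simp
  qed simp
  also have "\<dots> \<le> norm (homogeneity_defect g xb (n *\<^sub>R c) s) + 2 * l * n * dist c u"
    using mult_right_mono[OF \<open>s \<le> 1\<close>, of "l * n * dist c u"] lipschitz_on_nonneg[OF lip] \<open>0 \<le> n\<close>
    by simp
  finally show ?thesis .
qed

lemma lipschitz_directionally_differentiable_homogeneous:
  fixes g :: "'a::euclidean_space \<Rightarrow> 'b::real_normed_vector"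
  assumes dd: "directionally_differentiable g xb" and lip: "l-lipschitz_on (ball xb r) g"
    and "r > 0" and "\<epsilon> > 0"
  shows "\<exists>\<delta>>0. \<forall>h s. norm h < \<delta> \<longrightarrow> 0 \<le> s \<longrightarrow> s \<le> 1 \<longrightarrow>
           norm (homogeneity_defect g xb h s) \<le> \<epsilon> * norm h"
proof -
  obtain b where b_pos: "\<And>u. b u > 0" and ray: "\<And>u r s. 0 < r \<Longrightarrow> r < b u \<Longrightarrow> 0 \<le> s \<Longrightarrow> s \<le> 1 \<Longrightarrow>
      norm (homogeneity_defect g xb (r *\<^sub>R u) s) \<le> \<epsilon> / 2 * r"
    using directionally_differentiable_ray_homogeneous[OF dd, of "\<epsilon> / 2"] \<open>\<epsilon> > 0\<close> by (metis half_gt_zero)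
  define \<rho> where "\<rho> = \<epsilon> / (4 * (l + 1))"
  have "l \<ge> 0" using lip by (rule lipschitz_on_nonneg)
  then have "\<rho> > 0" and "2 * l * \<rho> \<le> \<epsilon> / 2"
    using \<open>\<epsilon> > 0\<close> by (auto simp: \<rho>_def field_simps)
  obtain K where "finite K" "K \<subseteq> sphere (0::'a) 1" and cover: "sphere 0 1 \<subseteq> (\<Union>c\<in>K. ball c \<rho>)"
    using compactE_image[OF compact_sphere, of "sphere (0::'a) 1" "\<lambda>c. ball c \<rho>"] \<open>\<rho> > 0\<close>
    by (metis centre_in_ball open_ball UN_I subsetI)
  define \<delta> where "\<delta> = Min (insert r (b ` K))"
  have "\<delta> > 0" using \<open>finite K\<close> \<open>r > 0\<close> b_pos by (auto simp: \<delta>_def)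
  have "norm (homogeneity_defect g xb h s) \<le> \<epsilon> * norm h"
    if "norm h < \<delta>" "0 \<le> s" "s \<le> 1" for h s
  proof (cases "h = 0")
    case False
    define n where "n = norm h"
    define u where "u = h /\<^sub>R n"
    have "n > 0" and "h = n *\<^sub>R u" and "norm u = 1"
      using False by (simp_all add: n_def u_def)
    then obtain c where "c \<in> K" "dist c u < \<rho>" using cover by force
    then have "norm c = 1" "n < b c" "n < r"
      using \<open>K \<subseteq> sphere 0 1\<close> \<open>finite K\<close> \<open>norm h < \<delta>\<close> by (auto simp: \<delta>_def n_def)
    have "norm (homogeneity_defect g xb h s) \<le> norm (homogeneity_defect g xb (n *\<^sub>R c) s) + 2 * l * n * dist c u"
      using homogeneity_defect_change_direction[OF lip \<open>norm u = 1\<close> \<open>norm c = 1\<close>] \<open>h = n *\<^sub>R u\<close>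
        \<open>n > 0\<close> \<open>n < r\<close> that by simp
    also have "\<dots> \<le> \<epsilon> / 2 * n + 2 * l * \<rho> * n"
    proof (rule add_mono)
      show "norm (homogeneity_defect g xb (n *\<^sub>R c) s) \<le> \<epsilon> / 2 * n"
        using ray[OF \<open>n > 0\<close> \<open>n < b c\<close>] that by simp
      show "2 * l * n * dist c u \<le> 2 * l * \<rho> * n"
        using mult_left_mono[of "dist c u" \<rho> "2 * l * n"] \<open>dist c u < \<rho>\<close> \<open>l \<ge> 0\<close> \<open>n > 0\<close>
        by (simp add: algebra_simps)
    qed
    also have "\<dots> \<le> \<epsilon> / 2 * n + \<epsilon> / 2 * n"
      using \<open>2 * l * \<rho> \<le> \<epsilon> / 2\<close> \<open>n > 0\<close> by (intro add_left_mono mult_right_mono) auto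
    also have "\<dots> = \<epsilon> * n" by simp
    finally show ?thesis by (simp add: n_def)
  qed (simp add: homogeneity_defect_def)
  with \<open>\<delta> > 0\<close> show ?thesis by blast
qed

lemma norm_step_bounds:
  fixes x y xb :: "'a::real_normed_vector"
  assumes "norm (y - xb) \<le> \<eta> * norm (x - xb)"
  shows "(1 - \<eta>) * norm (x - xb) \<le> norm (y - x)" and "norm (y - x) \<le> (1 + \<eta>) * norm (x - xb)"
proof -
  have "y - x = (y - xb) - (x - xb)" by simp
  then show "(1 - \<eta>) * norm (x - xb) \<le> norm (y - x)" "norm (y - x) \<le> (1 + \<eta>) * norm (x - xb)"
    using norm_triangle_ineq4[of "y - xb" "x - xb"] norm_triangle_ineq3[of "x - xb" "y - xb"] assms
    by (auto simp: algebra_simps norm_minus_commute)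
qed

lemma gradient_along_step_bound:
  fixes g :: "'a::real_normed_vector \<Rightarrow> 'b::real_normed_vector"
  assumes lip: "l-lipschitz_on (ball xb r) g"
    and hom: "\<And>s. 0 \<le> s \<Longrightarrow> s \<le> 1 \<Longrightarrow>
      norm (homogeneity_defect g xb (x - xb) s) \<le> \<epsilon> * norm (x - xb)"
    and y: "norm (y - xb) \<le> \<eta> * norm (x - xb)" and "\<eta> \<le> 1"
    and "norm (x - xb) < r" and t: "0 \<le> t" "t \<le> 1"
  shows "x + t *\<^sub>R (y - x) \<in> ball xb r"
    and "norm (g (x + t *\<^sub>R (y - x)) - g xb - (1 - t) *\<^sub>R (g x - g xb)) \<le> (\<epsilon> + l * \<eta>) * norm (x - xb)"
proof -
  define n where "n = norm (x - xb)"
  have split: "x + t *\<^sub>R (y - x) = xb + (1 - t) *\<^sub>R (x - xb) + t *\<^sub>R (y - xb)"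
    by (simp add: algebra_simps)
  have in_ball: "xb + v \<in> ball xb r \<longleftrightarrow> norm v < r" for v
    by (simp add: dist_norm)
  have "norm ((1 - t) *\<^sub>R (x - xb) + t *\<^sub>R (y - xb)) \<le> (1 - t) * n + t * (\<eta> * n)"
    using norm_triangle_ineq[of "(1 - t) *\<^sub>R (x - xb)" "t *\<^sub>R (y - xb)"] mult_left_mono[OF y \<open>0 \<le> t\<close>] t
    by (simp add: n_def)
  also have "\<dots> \<le> n"
    using mult_right_mono[OF \<open>\<eta> \<le> 1\<close>, of "t * n"] t by (simp add: n_def algebra_simps)
  finally show "x + t *\<^sub>R (y - x) \<in> ball xb r"
    using \<open>norm (x - xb) < r\<close> by (simp only: split add.assoc in_ball n_def)
  moreover have "xb + (1 - t) *\<^sub>R (x - xb) \<in> ball xb r"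
    using \<open>norm (x - xb) < r\<close> t mult_left_le_one_le[of n "1 - t"]
    unfolding in_ball n_def by simp
  ultimately have "norm (g (x + t *\<^sub>R (y - x)) - g (xb + (1 - t) *\<^sub>R (x - xb)))
      \<le> l * norm ((x + t *\<^sub>R (y - x)) - (xb + (1 - t) *\<^sub>R (x - xb)))"
    by (rule lipschitz_on_normD[OF lip])
  also have "norm ((x + t *\<^sub>R (y - x)) - (xb + (1 - t) *\<^sub>R (x - xb))) = t * norm (y - xb)"
    using t by (simp add: split)
  also have "l * (t * norm (y - xb)) \<le> l * (\<eta> * n)"
    using lipschitz_on_nonneg[OF lip] t y mult_left_le_one_le[of "norm (y - xb)" t]
    by (intro mult_left_mono) (auto simp: n_def)
  finally have near: "norm (g (x + t *\<^sub>R (y - x)) - g (xb + (1 - t) *\<^sub>R (x - xb))) \<le> l * (\<eta> * n)" .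
  have "g (x + t *\<^sub>R (y - x)) - g xb - (1 - t) *\<^sub>R (g x - g xb)
      = (g (x + t *\<^sub>R (y - x)) - g (xb + (1 - t) *\<^sub>R (x - xb)))
        + (g (xb + (1 - t) *\<^sub>R (x - xb)) - g xb - (1 - t) *\<^sub>R (g x - g xb))"
    by simp
  also have "norm \<dots> \<le> l * (\<eta> * n) + \<epsilon> * n"
    using near hom[of "1 - t"] t unfolding n_def homogeneity_defect_def
    by (intro order_trans[OF norm_triangle_ineq add_mono]) auto
  also have "\<dots> = (\<epsilon> + l * \<eta>) * norm (x - xb)"
    by (simp add: n_def algebra_simps)
  finally show "norm (g (x + t *\<^sub>R (y - x)) - g xb - (1 - t) *\<^sub>R (g x - g xb)) \<le> (\<epsilon> + l * \<eta>) * norm (x - xb)" .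
qed

lemma eventually_gradient_along_step:
  fixes g :: "'a::euclidean_space \<Rightarrow> 'b::real_normed_vector" and x d :: "nat \<Rightarrow> 'a"
  assumes dd: "directionally_differentiable g xb" and lip: "l-lipschitz_on (ball xb r) g"
    and "r > 0" and "\<epsilon> > 0" and xlim: "x \<longlonglongrightarrow> xb"
    and dsmall: "(\<lambda>k. norm (x k + d k - xb)) \<in> o(\<lambda>k. norm (x k - xb))"
  shows "eventually (\<lambda>k. \<forall>t\<in>{0..1}. x k + t *\<^sub>R d k \<in> ball xb r \<and>
           norm (g (x k + t *\<^sub>R d k) - g xb - (1 - t) *\<^sub>R (g (x k) - g xb)) \<le> \<epsilon> * norm (d k))
         sequentially"
proof -
  obtain \<delta> where "\<delta> > 0" and hom: "\<And>h s. norm h < \<delta> \<Longrightarrow> 0 \<le> s \<Longrightarrow> s \<le> 1 \<Longrightarrow>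
      norm (homogeneity_defect g xb h s) \<le> \<epsilon> / 4 * norm h"
    using lipschitz_directionally_differentiable_homogeneous[OF dd lip \<open>r > 0\<close>, of "\<epsilon> / 4"] \<open>\<epsilon> > 0\<close>
    by auto
  define \<eta> where "\<eta> = min (1 / 2) (\<epsilon> / (4 * (l + 1)))"
  have "l \<ge> 0" using lip by (rule lipschitz_on_nonneg)
  then have "\<eta> > 0" "\<eta> \<le> 1 / 2" "l * \<eta> \<le> \<epsilon> / 4"
    using \<open>\<epsilon> > 0\<close> by (auto simp: \<eta>_def min_def field_simps)
  have "eventually (\<lambda>k. dist (x k) xb < min \<delta> r) sequentially"
    using xlim \<open>\<delta> > 0\<close> \<open>r > 0\<close> unfolding tendsto_iff by (meson min_less_iff_conj)
  moreover have "eventually (\<lambda>k. norm (x k + d k - xb) \<le> \<eta> * norm (x k - xb)) sequentially"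
    using landau_o.smallD[OF dsmall \<open>\<eta> > 0\<close>] by simp
  ultimately show ?thesis
  proof eventually_elim
    case (elim k)
    define n where "n = norm (x k - xb)"
    have "n < \<delta>" "n < r" using elim by (auto simp: n_def dist_norm)
    have "(1 - \<eta>) * n \<le> norm (d k)"
      using norm_step_bounds(1)[OF elim(2)] by (simp add: n_def)
    have "n \<ge> 0" by (simp add: n_def)
    have "\<epsilon> * \<eta> \<le> \<epsilon> / 2"
      using mult_left_mono[OF \<open>\<eta> \<le> 1 / 2\<close>, of \<epsilon>] \<open>\<epsilon> > 0\<close> by simp
    then have "\<epsilon> / 4 + l * \<eta> \<le> \<epsilon> * (1 - \<eta>)"
      using \<open>l * \<eta> \<le> \<epsilon> / 4\<close> by (simp add: algebra_simps)
    then have "(\<epsilon> / 4 + l * \<eta>) * n \<le> \<epsilon> * ((1 - \<eta>) * n)"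
      using mult_right_mono \<open>n \<ge> 0\<close> by (metis mult.assoc)
    also have "\<dots> \<le> \<epsilon> * norm (d k)"
      using \<open>(1 - \<eta>) * n \<le> norm (d k)\<close> \<open>\<epsilon> > 0\<close> by simp
    finally have scale: "(\<epsilon> / 4 + l * \<eta>) * n \<le> \<epsilon> * norm (d k)" .
    have along: "x k + t *\<^sub>R d k \<in> ball xb r \<and>
        norm (g (x k + t *\<^sub>R d k) - g xb - (1 - t) *\<^sub>R (g (x k) - g xb)) \<le> (\<epsilon> / 4 + l * \<eta>) * n"
      if "0 \<le> t" "t \<le> 1" for t
      using gradient_along_step_bound[OF lip _ elim(2), of "\<epsilon> / 4" t] hom[of "x k - xb"]
        \<open>n < \<delta>\<close> \<open>n < r\<close> \<open>\<eta> \<le> 1 / 2\<close> that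
      by (simp add: n_def)
    show ?case
      using along scale by (meson atLeastAtMost_iff order_trans)
  qed
qed

lemma mean_value_half_slope_bound:
  fixes \<phi> :: "'a::real_inner \<Rightarrow> real" and g :: "'a \<Rightarrow> 'a"
  assumes der: "\<And>t. 0 \<le> t \<Longrightarrow> t \<le> 1 \<Longrightarrow>
      (\<phi> has_derivative (\<lambda>v. inner (g (x + t *\<^sub>R d)) v)) (at (x + t *\<^sub>R d))"
    and bound: "\<And>t. 0 \<le> t \<Longrightarrow> t \<le> 1 \<Longrightarrow> inner (g (x + t *\<^sub>R d) - (1 - t) *\<^sub>R g x) d \<le> B"
  shows "\<phi> (x + d) - \<phi> x \<le> inner (g x) d / 2 + B"
proof -
  define F where "F t = \<phi> (x + t *\<^sub>R d) - (t - t\<^sup>2 / 2) * inner (g x) d" for t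
  have "(F has_real_derivative inner (g (x + t *\<^sub>R d) - (1 - t) *\<^sub>R g x) d) (at t)"
    if "0 \<le> t" "t \<le> 1" for t
  proof -
    have "((\<lambda>t. x + t *\<^sub>R d) has_derivative (\<lambda>s. s *\<^sub>R d)) (at t)"
      by (auto intro!: derivative_eq_intros)
    from diff_chain_at[OF this der[OF that]]
    have "((\<lambda>t. \<phi> (x + t *\<^sub>R d)) has_derivative (\<lambda>s. inner (g (x + t *\<^sub>R d)) (s *\<^sub>R d))) (at t)"
      by (simp add: o_def)
    then have "((\<lambda>t. \<phi> (x + t *\<^sub>R d)) has_real_derivative inner (g (x + t *\<^sub>R d)) d) (at t)"
      by (simp add: has_real_derivative_iff_has_vector_derivative has_vector_derivative_def)
    then show ?thesis
      unfolding F_def by (auto intro!: derivative_eq_intros simp: inner_diff_left algebra_simps)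
  qed
  then obtain z where "0 < z" "z < 1" "F 1 - F 0 = inner (g (x + z *\<^sub>R d) - (1 - z) *\<^sub>R g x) d"
    using MVT2[of 0 1 F "\<lambda>t. inner (g (x + t *\<^sub>R d) - (1 - t) *\<^sub>R g x) d"] by auto
  then show ?thesis
    using bound[of z] by (simp add: F_def)
qed

lemma eventually_armijo_of_descent:
  fixes \<phi> :: "'a::euclidean_space \<Rightarrow> real" and g :: "'a \<Rightarrow> 'a" and x d :: "nat \<Rightarrow> 'a"
  assumes der: "\<forall>y\<in>ball xb r. (\<phi> has_derivative (\<lambda>h. inner (g y) h)) (at y)"
    and lip: "l-lipschitz_on (ball xb r) g" and "r > 0" and "g xb = 0"
    and dd: "directionally_differentiable g xb" and xlim: "x \<longlonglongrightarrow> xb"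
    and dsmall: "(\<lambda>k. norm (x k + d k - xb)) \<in> o(\<lambda>k. norm (x k - xb))"
    and "\<kappa> > 0" and descent: "eventually (\<lambda>k. inner (g (x k)) (d k) \<le> - (1 / \<kappa>) * (norm (d k))\<^sup>2) sequentially"
    and "0 < \<sigma>" "\<sigma> < 1 / 2"
  shows "eventually (\<lambda>k. \<phi> (x k + d k) \<le> \<phi> (x k) + \<sigma> * inner (g (x k)) (d k)) sequentially"
proof -
  define \<epsilon> where "\<epsilon> = (1 / 2 - \<sigma>) / \<kappa>"
  have "\<epsilon> > 0" using \<open>\<kappa> > 0\<close> \<open>\<sigma> < 1 / 2\<close> by (simp add: \<epsilon>_def)
  from eventually_gradient_along_step[OF dd lip \<open>r > 0\<close> this xlim dsmall] descent
  show ?thesis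
  proof eventually_elim
    case (elim k)
    have "\<phi> (x k + d k) - \<phi> (x k) \<le> inner (g (x k)) (d k) / 2 + \<epsilon> * (norm (d k))\<^sup>2"
    proof (rule mean_value_half_slope_bound)
      fix t :: real assume "0 \<le> t" "t \<le> 1"
      with elim(1) have "x k + t *\<^sub>R d k \<in> ball xb r"
        and near: "norm (g (x k + t *\<^sub>R d k) - (1 - t) *\<^sub>R g (x k)) \<le> \<epsilon> * norm (d k)"
        using \<open>g xb = 0\<close> by auto
      then show "(\<phi> has_derivative inner (g (x k + t *\<^sub>R d k))) (at (x k + t *\<^sub>R d k))"
        using der by blast
      have "inner (g (x k + t *\<^sub>R d k) - (1 - t) *\<^sub>R g (x k)) (d k)
          \<le> norm (g (x k + t *\<^sub>R d k) - (1 - t) *\<^sub>R g (x k)) * norm (d k)"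
        by (rule norm_cauchy_schwarz)
      also have "\<dots> \<le> \<epsilon> * (norm (d k))\<^sup>2"
        using mult_right_mono[OF near norm_ge_zero] by (simp add: power2_eq_square mult.assoc)
      finally show "inner (g (x k + t *\<^sub>R d k) - (1 - t) *\<^sub>R g (x k)) (d k) \<le> \<epsilon> * (norm (d k))\<^sup>2" .
    qed
    moreover have "(1 / 2 - \<sigma>) * inner (g (x k)) (d k) \<le> - \<epsilon> * (norm (d k))\<^sup>2"
      using mult_left_mono[OF elim(2), of "1 / 2 - \<sigma>"] \<open>\<sigma> < 1 / 2\<close> by (simp add: \<epsilon>_def)
    ultimately show ?case by (simp add: algebra_simps)
  qed
qed

lemma lipschitz_on_norm_le_at_zero:
  assumes "l-lipschitz_on (ball xb r) g" "g xb = 0" "y \<in> ball xb r"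
  shows "norm (g y) \<le> l * norm (y - xb)"
proof -
  have "xb \<in> ball xb r"
    using assms(3) by (simp add: le_less_trans[OF zero_le_dist])
  then show ?thesis
    using lipschitz_on_normD[OF assms(1) assms(3) \<open>xb \<in> ball xb r\<close>] assms(2) by simp
qed

lemma armijo_of_quadratic_decrease_step:
  fixes \<phi> :: "'a::real_inner \<Rightarrow> real" and g :: "'a \<Rightarrow> 'a"
  assumes lip: "l-lipschitz_on (ball xb r) g" and "g xb = 0" and "l > 0" and "\<kappa> > 0" and "\<sigma> > 0"
    and "0 < \<eta>" "\<eta> \<le> 1 / 2" and eta_small: "\<eta> * (2 * l + 1 / \<kappa> + \<sigma> * l) \<le> 1 / (2 * \<kappa>) - \<sigma> * l"
    and "norm (x - xb) < r" and step: "norm (x + d - xb) \<le> \<eta> * norm (x - xb)"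
    and decrease: "\<phi> (x + d) - \<phi> x \<le> inner (g (x + d)) d - (1 / (2 * \<kappa>)) * (norm d)\<^sup>2"
  shows "\<phi> (x + d) \<le> \<phi> x + \<sigma> * inner (g x) d"
proof -
  define n where "n = norm (x - xb)"
  have "n \<ge> 0" "\<eta> * n \<le> n"
    using mult_right_mono[of \<eta> 1 n] \<open>\<eta> \<le> 1 / 2\<close> by (auto simp: n_def)
  then have "x \<in> ball xb r" "x + d \<in> ball xb r"
    using \<open>norm (x - xb) < r\<close> step by (auto simp: n_def dist_norm norm_minus_commute)
  have d_lower: "(1 - \<eta>) * n \<le> norm d" and d_upper: "norm d \<le> (1 + \<eta>) * n"
    using norm_step_bounds[OF step] by (simp_all add: n_def)
  have g_new: "norm (g (x + d)) \<le> l * (\<eta> * n)"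
    using lipschitz_on_norm_le_at_zero[OF lip \<open>g xb = 0\<close> \<open>x + d \<in> _\<close>] step \<open>l > 0\<close>
    by (simp add: n_def order_trans[OF _ mult_left_mono])
  have g_old: "norm (g x) \<le> l * n"
    using lipschitz_on_norm_le_at_zero[OF lip \<open>g xb = 0\<close> \<open>x \<in> _\<close>] by (simp add: n_def)
  have "inner (g (x + d)) d \<le> norm (g (x + d)) * norm d"
    by (rule norm_cauchy_schwarz)
  also have "\<dots> \<le> l * (\<eta> * n) * ((1 + \<eta>) * n)"
    by (rule mult_mono[OF g_new d_upper]) (use \<open>l > 0\<close> \<open>\<eta> > 0\<close> \<open>n \<ge> 0\<close> in auto)
  also have "\<dots> \<le> 2 * l * \<eta> * n\<^sup>2"
    using mult_left_mono[of "1 + \<eta>" 2 "l * \<eta> * n\<^sup>2"] \<open>\<eta> \<le> 1 / 2\<close> \<open>\<eta> > 0\<close> \<open>l > 0\<close>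
    by (simp add: power2_eq_square algebra_simps)
  finally have slope_new: "inner (g (x + d)) d \<le> 2 * l * \<eta> * n\<^sup>2" .
  have "- inner (g x) d \<le> norm (g x) * norm d"
    using norm_cauchy_schwarz[of "- g x" d] by simp
  also have "\<dots> \<le> l * n * ((1 + \<eta>) * n)"
    by (rule mult_mono[OF g_old d_upper]) (use \<open>l > 0\<close> \<open>n \<ge> 0\<close> in auto)
  finally have "- inner (g x) d \<le> l * n * ((1 + \<eta>) * n)" .
  then have slope_old: "- (\<sigma> * inner (g x) d) \<le> \<sigma> * l * (1 + \<eta>) * n\<^sup>2"
    using mult_left_mono[of _ _ \<sigma>] \<open>\<sigma> > 0\<close> by (fastforce simp: power2_eq_square algebra_simps)
  have "(1 - 2 * \<eta>) * n\<^sup>2 \<le> ((1 - \<eta>) * n)\<^sup>2"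
    using \<open>\<eta> > 0\<close> by (simp add: power2_eq_square algebra_simps)
  also have "\<dots> \<le> (norm d)\<^sup>2"
    using d_lower \<open>\<eta> \<le> 1 / 2\<close> \<open>n \<ge> 0\<close> by (intro power_mono) auto
  finally have "1 / (2 * \<kappa>) * ((1 - 2 * \<eta>) * n\<^sup>2) \<le> 1 / (2 * \<kappa>) * (norm d)\<^sup>2"
    using \<open>\<kappa> > 0\<close> by (simp add: divide_right_mono)
  then have "\<phi> (x + d) - \<phi> x \<le> 2 * l * \<eta> * n\<^sup>2 - 1 / (2 * \<kappa>) * ((1 - 2 * \<eta>) * n\<^sup>2)"
    using decrease slope_new by linarith
  also have "\<dots> = (\<eta> * (2 * l + 1 / \<kappa> + \<sigma> * l) - (1 / (2 * \<kappa>) - \<sigma> * l)) * n\<^sup>2 - \<sigma> * l * (1 + \<eta>) * n\<^sup>2"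
    using \<open>\<kappa> > 0\<close> by (simp add: field_simps)
  also have "\<dots> \<le> \<sigma> * inner (g x) d"
    using mult_right_mono[OF _ zero_le_power2[of n], of "\<eta> * (2 * l + 1 / \<kappa> + \<sigma> * l) - (1 / (2 * \<kappa>) - \<sigma> * l)" 0]
      eta_small slope_old by linarith
  finally show ?thesis by simp
qed

lemma eventually_armijo_of_quadratic_decrease:
  fixes \<phi> :: "'a::real_inner \<Rightarrow> real" and g :: "'a \<Rightarrow> 'a" and x d :: "nat \<Rightarrow> 'a"
  assumes lip: "l-lipschitz_on (ball xb r) g" and "r > 0" and "g xb = 0" and "l > 0"
    and xlim: "x \<longlonglongrightarrow> xb"
    and dsmall: "(\<lambda>k. norm (x k + d k - xb)) \<in> o(\<lambda>k. norm (x k - xb))"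
    and "\<kappa> > 0" and decrease: "eventually (\<lambda>k. \<phi> (x k + d k) - \<phi> (x k)
                     \<le> inner (g (x k + d k)) (d k) - (1 / (2 * \<kappa>)) * (norm (d k))\<^sup>2) sequentially"
    and "0 < \<sigma>" "\<sigma> < 1 / (2 * l * \<kappa>)"
  shows "eventually (\<lambda>k. \<phi> (x k + d k) \<le> \<phi> (x k) + \<sigma> * inner (g (x k)) (d k)) sequentially"
proof -
  define \<gamma> where "\<gamma> = 1 / (2 * \<kappa>) - \<sigma> * l"
  define c where "c = 2 * l + 1 / \<kappa> + \<sigma> * l"
  define \<eta> where "\<eta> = min (1 / 2) (\<gamma> / c)"
  have "\<gamma> > 0"
    using \<open>\<sigma> < 1 / (2 * l * \<kappa>)\<close> \<open>l > 0\<close> \<open>\<kappa> > 0\<close> by (simp add: \<gamma>_def field_simps)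
  moreover have "c > 0"
    using \<open>l > 0\<close> \<open>\<kappa> > 0\<close> \<open>\<sigma> > 0\<close> by (simp add: c_def add_pos_pos)
  ultimately have "\<eta> > 0" "\<eta> \<le> 1 / 2" "\<eta> * c \<le> \<gamma>"
    by (auto simp: \<eta>_def min_def field_simps)
  have "eventually (\<lambda>k. dist (x k) xb < r) sequentially"
    using xlim \<open>r > 0\<close> by (simp add: tendsto_iff)
  moreover have "eventually (\<lambda>k. norm (x k + d k - xb) \<le> \<eta> * norm (x k - xb)) sequentially"
    using landau_o.smallD[OF dsmall \<open>\<eta> > 0\<close>] by simp
  ultimately show ?thesis using decrease
  proof eventually_elim
    case (elim k)
    then show ?case
      using armijo_of_quadratic_decrease_step[OF lip \<open>g xb = 0\<close> \<open>l > 0\<close> \<open>\<kappa> > 0\<close> \<open>\<sigma> > 0\<close> \<open>\<eta> > 0\<close> \<open>\<eta> \<le> 1 / 2\<close>]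
        \<open>\<eta> * c \<le> \<gamma>\<close> by (simp add: c_def \<gamma>_def dist_norm)
  qed
qed

theorem proposition4p4:
  fixes \<phi> :: "'a::euclidean_space \<Rightarrow> real" and g :: "'a \<Rightarrow> 'a"
    and xb :: 'a and x d :: "nat \<Rightarrow> 'a" and l \<sigma> :: real
  assumes C1: "\<exists>r>0. (\<forall>y\<in>ball xb r. (\<phi> has_derivative (\<lambda>h. inner (g y) h)) (at y))
                     \<and> continuous_on (ball xb r) g"
    and crit: "g xb = 0"
    and lpos: "l > 0"
    and lip: "\<exists>r>0. \<forall>y\<in>ball xb r. \<forall>z\<in>ball xb r. norm (g y - g z) \<le> l * dist y z"
    and ss: "semismooth_star_fun g xb"
    and xlim: "x \<longlonglongrightarrow> xb"
    and xne: "\<forall>k. x k \<noteq> xb"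
    and dsmall: "(\<lambda>k. norm (x k + d k - xb)) \<in> o(\<lambda>k. norm (x k - xb))"
    and cases:
      "(directionally_differentiable g xb \<and>
          (\<exists>\<kappa>>0. eventually (\<lambda>k. inner (g (x k)) (d k) \<le> - (1 / \<kappa>) * (norm (d k))\<^sup>2) sequentially)
          \<and> 0 < \<sigma> \<and> \<sigma> < 1 / 2)
       \<or> (\<exists>\<kappa>>0. eventually (\<lambda>k. \<phi> (x k + d k) - \<phi> (x k)
                     \<le> inner (g (x k + d k)) (d k) - (1 / (2 * \<kappa>)) * (norm (d k))\<^sup>2) sequentially
          \<and> 0 < \<sigma> \<and> \<sigma> < 1 / (2 * l * \<kappa>))"
  shows "eventually (\<lambda>k. \<phi> (x k + d k) \<le> \<phi> (x k) + \<sigma> * inner (g (x k)) (d k)) sequentially"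
proof -
  obtain r1 where "r1 > 0" and der: "\<forall>y\<in>ball xb r1. (\<phi> has_derivative (\<lambda>h. inner (g y) h)) (at y)"
    using C1 by blast
  obtain r2 where "r2 > 0" and lip2: "\<forall>y\<in>ball xb r2. \<forall>z\<in>ball xb r2. norm (g y - g z) \<le> l * dist y z"
    using lip by blast
  define r where "r = min r1 r2"
  have "r > 0" using \<open>r1 > 0\<close> \<open>r2 > 0\<close> by (simp add: r_def)
  have der_r: "\<forall>y\<in>ball xb r. (\<phi> has_derivative (\<lambda>h. inner (g y) h)) (at y)"
    using der by (simp add: r_def)
  have lip_r: "l-lipschitz_on (ball xb r) g"
    using lip2 lpos by (intro lipschitz_onI) (auto simp: r_def dist_norm)
  from cases show ?thesis
    using eventually_armijo_of_descent[OF der_r lip_r \<open>r > 0\<close> crit _ xlim dsmall]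
      eventually_armijo_of_quadratic_decrease[OF lip_r \<open>r > 0\<close> crit lpos xlim dsmall]
    by blast
qed

end
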